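(* There is an absolute constant $C>0$ such that for every $\varepsilon\in(0,1]$, the refined tri-hypergraph of differences of any disjointness-trigraph with sensitivity $\varepsilon$ has VC-dimension at most $C\cdot\frac{1}{\varepsilon}\ln\frac{2}{\varepsilon}$.
   Context: A tri-hypergraph is $(V,\mathcal{E})$ with $V$ finite and $\mathcal{E}$ a collection of ordered partitions $(B,R,W)$ of $V$ (tri-edges); $X\subseteq V$ is shattered if for every $Y\subseteq X$ some tri-edge has $X\cap B=X\cap(B\cup R)=Y$; the VC-dimension is the largest size of a shattered set. For tri-edges $e_1=(B_1,R_1,W_1)$, $e_2=(B_2,R_2,W_2)$, $e_1\setminus e_2=(B,R,W)$ with $B=B_1\cap W_2$, $R=((B_1\cup R_1)\cap(W_2\cup R_2))\setminus B$, $W=V\setminus(B\cup R)$. A trigraph $(V,E,R)$ (plain edges $E$ and red edges $R$ disjoint sets of pairs of distinct vertices) gives for each $v$ the tri-edge $e_v=(N[v],R(v),W(v))$, where $N[v]$ is $v$ with its plain neighbours, $R(v)$ its red neighbours and $W(v)$ the remaining vertices. Let $\mathcal{F}$ be a finite nonempty family of subsets of $V$, $\mathcal{F}_{xy}$ the members containing $x$ and $y$. The disjointness-trigraph with sensitivity $\varepsilon$ is $T=(V,E,R)$ with $E=\{xy:x\ne y,\mathcal{F}_{xy}=\emptyset\}$, $R=\{xy:0<|\mathcal{F}_{xy}|\leq\varepsilon|\mathcal{F}|\}$. Let $R_1=\{xy\in R:|\mathcal{F}_{xy}|\leq\varepsilon|\mathcal{F}|/2\}$, $R_2=R\setminus R_1$,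 $T_1=(V,E,R_1)$, $T_2=(V,E\cup R_1,R_2)$. The refined tri-hypergraph of differences of $T$ is $(V,\{e^{T_1}_v\setminus e^{T_2}_w: v,w\in V\})$, where $e^{T_i}_v$ is the tri-edge of $v$ in $T_i$. *)

theory Defs
  imports "HOL-Analysis.Analysis"
begin

type_synonym 'a triedge = "'a set \<times> 'a set \<times> 'a set"

definition is_triedge :: "'a set \<Rightarrow> 'a triedge \<Rightarrow> bool" where
  "is_triedge V e = (case e of (B, R, W) \<Rightarrow>
      B \<union> R \<union> W = V \<and> B \<inter> R = {} \<and> B \<inter> W = {} \<and> R \<inter> W = {})"

definition tri_shattered :: "'a set \<Rightarrow> 'a triedge set \<Rightarrow> 'a set \<Rightarrow> bool" where
  "tri_shattered V \<E> X = (X \<subseteq> V \<and>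
     (\<forall>Y \<subseteq> X. \<exists>e \<in> \<E>. case e of (B, R, W) \<Rightarrow> X \<inter> B = Y \<and> X \<inter> (B \<union> R) = Y))"

definition tri_vc_dim :: "'a set \<Rightarrow> 'a triedge set \<Rightarrow> nat" where
  "tri_vc_dim V \<E> = Max ({0} \<union> {card X | X. tri_shattered V \<E> X})"

definition triedge_diff :: "'a set \<Rightarrow> 'a triedge \<Rightarrow> 'a triedge \<Rightarrow> 'a triedge" where
  "triedge_diff V e1 e2 = (case e1 of (B1, R1, W1) \<Rightarrow> case e2 of (B2, R2, W2) \<Rightarrow>
     (let B = B1 \<inter> W2;
          R = ((B1 \<union> R1) \<inter> (W2 \<union> R2)) - B
      in (B, R, V - (B \<union> R))))"

text \<open>A trigraph (V, E, R): plain and red edges are sets of unordered pairs {x,y}, x \<noteq> y.\<close>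
definition trigraph_edge :: "'a set \<Rightarrow> 'a set set \<Rightarrow> 'a set set \<Rightarrow> 'a \<Rightarrow> 'a triedge" where
  "trigraph_edge V E R v =
     (let N = {v} \<union> {u \<in> V. u \<noteq> v \<and> {u, v} \<in> E};
          Rv = {u \<in> V. u \<noteq> v \<and> {u, v} \<in> R}
      in (N, Rv, V - (N \<union> Rv)))"

definition fam_xy :: "'a set set \<Rightarrow> 'a \<Rightarrow> 'a \<Rightarrow> 'a set set" where
  "fam_xy \<F> x y = {S \<in> \<F>. x \<in> S \<and> y \<in> S}"

definition disj_E :: "'a set \<Rightarrow> 'a set set \<Rightarrow> 'a set set" where
  "disj_E V \<F> = {{x, y} | x y. x \<in> V \<and> y \<in> V \<and> x \<noteq> y \<and> fam_xy \<F> x y = {}}"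

definition disj_R :: "'a set \<Rightarrow> 'a set set \<Rightarrow> real \<Rightarrow> 'a set set" where
  "disj_R V \<F> \<epsilon> = {{x, y} | x y. x \<in> V \<and> y \<in> V \<and> x \<noteq> y \<and>
      0 < card (fam_xy \<F> x y) \<and> real (card (fam_xy \<F> x y)) \<le> \<epsilon> * real (card \<F>)}"

definition disj_R1 :: "'a set \<Rightarrow> 'a set set \<Rightarrow> real \<Rightarrow> 'a set set" where
  "disj_R1 V \<F> \<epsilon> = {{x, y} | x y. {x, y} \<in> disj_R V \<F> \<epsilon> \<and>
      real (card (fam_xy \<F> x y)) \<le> \<epsilon> * real (card \<F>) / 2}"

definition disj_R2 :: "'a set \<Rightarrow> 'a set set \<Rightarrow> real \<Rightarrow> 'a set set" where
  "disj_R2 V \<F> \<epsilon> = disj_R V \<F> \<epsilon> - disj_R1 V \<F> \<epsilon>"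

definition refined_diff_edges :: "'a set \<Rightarrow> 'a set set \<Rightarrow> real \<Rightarrow> 'a triedge set" where
  "refined_diff_edges V \<F> \<epsilon> =
     {triedge_diff V (trigraph_edge V (disj_E V \<F>) (disj_R1 V \<F> \<epsilon>) v)
                     (trigraph_edge V (disj_E V \<F> \<union> disj_R1 V \<F> \<epsilon>) (disj_R2 V \<F> \<epsilon>) w)
      | v w. v \<in> V \<and> w \<in> V}"

end

theory Submission
  imports Defs
begin

text \<open>If \<open>X\<close> is shattered, every \<open>Y \<subseteq> X\<close> is traced on \<open>X\<close> by the difference tri-edge of
  some pair \<open>(v, w)\<close>: members of \<open>Y\<close> lie in no set of \<open>\<F>\<close> together with \<open>v\<close> and in more than
  \<open>\<epsilon>|\<F>|\<close> sets together with \<open>w\<close>, while non-members fail one of these by a factor 2.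
  Draw \<open>k \<approx> 1600/\<epsilon>\<close> members of \<open>\<F>\<close> with replacement and estimate \<open>Y\<close> as the set of
  \<open>u \<in> X\<close> sharing no drawn set with \<open>v\<close> and at least \<open>3k\<epsilon>/4\<close> drawn sets with \<open>w\<close>.
  By Chebyshev's inequality and the avoidance probability, each \<open>u \<notin> {v, w}\<close> is misclassified
  with probability at most \<open>16/(k\<epsilon>) \<le> 1/100\<close>, so for at least half of the samples the
  estimate is within Hamming distance \<open>r = 4 + |X|/50\<close> of \<open>Y\<close>.  The estimate depends on
  \<open>v\<close> and \<open>w\<close> only through which drawn sets contain them, so one sample yields at most
  \<open>4\<^sup>k\<close> estimates, each within distance \<open>r\<close> of at most \<open>2\<^sup>r(3/2)\<^bsup>|X|\<^esup>\<close> sets.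
  Double counting pairs (sample, \<open>Y\<close>) gives \<open>2\<^bsup>|X|\<^esup> \<le> 2 \<cdot> 4\<^sup>k 2\<^sup>r (3/2)\<^bsup>|X|\<^esup>\<close>,
  hence \<open>|X| = O(1/\<epsilon>)\<close>, which is stronger than the claimed bound.\<close>

section \<open>Sampling with replacement\<close>

text \<open>Sums over \<open>samples F k\<close> are \<open>|F|\<^sup>k\<close> times expectations over \<open>k\<close> independent uniform
  draws from \<open>F\<close>.\<close>

definition samples :: "'b set \<Rightarrow> nat \<Rightarrow> 'b list set" where
  "samples F k = {xs. set xs \<subseteq> F \<and> length xs = k}"

definition hits :: "'b set \<Rightarrow> 'b list \<Rightarrow> nat" where
  "hits G xs = length (filter (\<lambda>S. S \<in> G) xs)"

lemma finite_samples: "finite F \<Longrightarrow> finite (samples F k)"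
  unfolding samples_def by (rule finite_lists_length_eq)

lemma card_samples: "finite F \<Longrightarrow> card (samples F k) = card F ^ k"
  unfolding samples_def by (rule card_lists_length_eq)

lemma set_subset_if_samples: "xs \<in> samples F k \<Longrightarrow> set xs \<subseteq> F"
  unfolding samples_def by simp

lemma sum_samples_Suc:
  assumes "finite F"
  shows "(\<Sum>xs\<in>samples F (Suc k). f xs) = (\<Sum>x\<in>F. \<Sum>xs\<in>samples F k. f (x # xs))"
proof -
  have "(\<Sum>xs\<in>samples F (Suc k). f xs) = (\<Sum>(xs, x)\<in>samples F k \<times> F. f (x # xs))"
    unfolding samples_def lists_length_Suc_eq
    by (subst sum.reindex) (auto simp: inj_on_def case_prod_unfold)
  also have "\<dots> = (\<Sum>xs\<in>samples F k. \<Sum>x\<in>F. f (x # xs))"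
    by (simp add: sum.cartesian_product)
  also have "\<dots> = (\<Sum>x\<in>F. \<Sum>xs\<in>samples F k. f (x # xs))"
    by (rule sum.swap)
  finally show ?thesis .
qed

lemma hits_Cons: "hits G (x # xs) = of_bool (x \<in> G) + hits G xs"
  by (simp add: hits_def)

lemma sum_hits:
  assumes "finite F" "G \<subseteq> F"
  shows "(\<Sum>xs\<in>samples F k. real (hits G xs)) * real (card F) = real k * real (card G) * real (card F) ^ k"
proof (induction k)
  case 0
  then show ?case by (simp add: samples_def hits_def)
next
  case (Suc k)
  have "(\<Sum>xs\<in>samples F (Suc k). real (hits G xs))
      = (\<Sum>x\<in>F. of_bool (x \<in> G) * real (card F ^ k) + (\<Sum>xs\<in>samples F k. real (hits G xs)))"
    unfolding sum_samples_Suc[OF assms(1)] hits_Cons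
    by (simp add: sum.distrib card_samples[OF assms(1)] mult.commute)
  also have "\<dots> = card G * real (card F ^ k) + card F * (\<Sum>xs\<in>samples F k. real (hits G xs))"
    using assms by (simp add: sum.distrib sum_distrib_right[symmetric] Int_absorb1)
  finally show ?case using Suc by (simp add: algebra_simps)
qed

lemma sum_hits_squared:
  assumes "finite F" "G \<subseteq> F"
  shows "(\<Sum>xs\<in>samples F k. real (hits G xs) ^ 2) * real (card F) ^ 2
     = real (card F) ^ k * (real k * real (card G) * real (card F) + real k * (real k - 1) * real (card G) ^ 2)"
proof (induction k)
  case 0
  then show ?case by (simp add: samples_def hits_def)
next
  case (Suc k)
  let ?m = "real (card F)" and ?g = "real (card G)"
  let ?S1 = "\<Sum>xs\<in>samples F k. real (hits G xs)" and ?S2 = "\<Sum>xs\<in>samples F k. real (hits G xs) ^ 2"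
  have "(\<Sum>xs\<in>samples F (Suc k). real (hits G xs) ^ 2)
      = (\<Sum>x\<in>F. of_bool (x \<in> G) * ?m ^ k + 2 * of_bool (x \<in> G) * ?S1 + ?S2)"
  proof -
    have "(of_bool b + h) ^ 2 = of_bool b + 2 * of_bool b * h + h ^ 2" for b and h :: real
      by (cases b) (simp_all add: power2_eq_square algebra_simps)
    then show ?thesis
      unfolding sum_samples_Suc[OF assms(1)] hits_Cons
      by (simp add: sum.distrib sum_distrib_left card_samples[OF assms(1)] mult.commute)
  qed
  also have "\<dots> = ?g * ?m ^ k + 2 * ?g * ?S1 + ?m * ?S2"
    using assms by (simp add: sum.distrib sum_distrib_right[symmetric] Int_absorb1)
  finally have "(\<Sum>xs\<in>samples F (Suc k). real (hits G xs) ^ 2) * ?m ^ 2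
      = ?g * ?m ^ (k + 2) + 2 * ?g * ?m * (?S1 * ?m) + ?m * (?S2 * ?m ^ 2)"
    by (simp add: algebra_simps power2_eq_square)
  also have "\<dots> = ?g * ?m ^ (k + 2) + 2 * ?g * ?m * (k * ?g * ?m ^ k)
      + ?m * (?m ^ k * (k * ?g * ?m + k * (real k - 1) * ?g ^ 2))"
    using sum_hits[OF assms, of k] Suc by simp
  also have "\<dots> = ?m ^ Suc k * (Suc k * ?g * ?m + Suc k * (real (Suc k) - 1) * ?g ^ 2)"
    by (simp add: algebra_simps power2_eq_square)
  finally show ?case .
qed

lemma sum_hits_deviation_squared_le:
  assumes "finite F" "G \<subseteq> F"
  shows "(\<Sum>xs\<in>samples F k. (real (card F) * hits G xs - real k * card G) ^ 2)
    \<le> real k * real (card G) * real (card F) ^ Suc k"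
proof -
  let ?m = "real (card F)" and ?g = "real (card G)"
  let ?S1 = "\<Sum>xs\<in>samples F k. real (hits G xs)" and ?S2 = "\<Sum>xs\<in>samples F k. real (hits G xs) ^ 2"
  have "(\<Sum>xs\<in>samples F k. (?m * hits G xs - k * ?g) ^ 2)
      = (\<Sum>xs\<in>samples F k. ?m ^ 2 * hits G xs ^ 2 - 2 * k * ?g * ?m * hits G xs + (k * ?g) ^ 2)"
    by (simp add: power2_eq_square algebra_simps)
  also have "\<dots> = ?S2 * ?m ^ 2 - 2 * k * ?g * (?S1 * ?m) + (k * ?g) ^ 2 * ?m ^ k"
    by (simp add: sum.distrib sum_subtractf sum_distrib_left card_samples[OF assms(1)] algebra_simps)
  also have "\<dots> = ?m ^ k * (k * ?g * ?m + k * (real k - 1) * ?g ^ 2)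
      - 2 * k * ?g * (k * ?g * ?m ^ k) + (k * ?g) ^ 2 * ?m ^ k"
    by (simp add: sum_hits[OF assms] sum_hits_squared[OF assms])
  also have "\<dots> = ?m ^ k * (k * ?g * ?m - k * ?g ^ 2)"
    by (simp add: algebra_simps power2_eq_square)
  also have "\<dots> \<le> ?m ^ k * (k * ?g * ?m)"
    by (intro mult_left_mono) auto
  finally show ?thesis
    by (simp add: algebra_simps)
qed

lemma card_hits_deviation_le:
  fixes \<delta> :: real
  assumes "finite F" "G \<subseteq> F" "\<delta> > 0"
  shows "card {xs\<in>samples F k. \<delta> \<le> \<bar>real (card F) * hits G xs - real k * card G\<bar>} * \<delta> ^ 2
    \<le> real k * real (card G) * real (card F) ^ Suc k"
proof -
  let ?dev = "\<lambda>xs. real (card F) * hits G xs - real k * card G"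
  let ?B = "{xs\<in>samples F k. \<delta> \<le> \<bar>?dev xs\<bar>}"
  have "card ?B * \<delta> ^ 2 = (\<Sum>xs\<in>?B. \<delta> ^ 2)"
    by simp
  also have "\<dots> \<le> (\<Sum>xs\<in>?B. ?dev xs ^ 2)"
    using assms(3) by (intro sum_mono) (metis (mono_tags) abs_le_square_iff abs_of_pos mem_Collect_eq)
  also have "\<dots> \<le> (\<Sum>xs\<in>samples F k. ?dev xs ^ 2)"
    by (intro sum_mono2 finite_samples[OF assms(1)]) auto
  also have "\<dots> \<le> real k * real (card G) * real (card F) ^ Suc k"
    by (rule sum_hits_deviation_squared_le[OF assms(1,2)])
  finally show ?thesis .
qed

lemma card_hits_below_le:
  fixes \<epsilon> :: real
  assumes "finite F" "G \<subseteq> F" "k > 0" "\<epsilon> > 0" "\<epsilon> * card F < card G"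
  shows "card {xs\<in>samples F k. hits G xs < 3 / 4 * k * \<epsilon>} * (k * \<epsilon>) \<le> 16 * real (card F) ^ k"
proof -
  let ?m = "real (card F)" and ?g = "real (card G)"
  let ?B = "{xs\<in>samples F k. hits G xs < 3 / 4 * k * \<epsilon>}"
  have "0 \<le> \<epsilon> * ?m"
    using assms(4) by simp
  then have g: "?g > 0"
    using assms(5) by linarith
  moreover have "?g \<le> ?m"
    using assms(1,2) by (simp add: card_mono)
  ultimately have m: "?m > 0"
    by linarith
  have "?B \<subseteq> {xs\<in>samples F k. k * ?g / 4 \<le> \<bar>?m * hits G xs - k * ?g\<bar>}"
  proof safe
    fix xs assume "hits G xs < 3 / 4 * k * \<epsilon>"
    then have "?m * hits G xs \<le> 3 / 4 * k * (\<epsilon> * ?m)"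
      using m by (simp add: algebra_simps)
    also have "\<dots> \<le> 3 / 4 * k * ?g"
      using assms(5) by (intro mult_left_mono) auto
    finally show "k * ?g / 4 \<le> \<bar>?m * hits G xs - k * ?g\<bar>"
      by linarith
  qed
  then have "card ?B * (k * ?g / 4) ^ 2 \<le> card {xs\<in>samples F k. k * ?g / 4 \<le> \<bar>?m * hits G xs - k * ?g\<bar>} * (k * ?g / 4) ^ 2"
    using finite_samples[OF assms(1)] by (intro mult_right_mono) (auto intro: card_mono)
  also have "\<dots> \<le> k * ?g * ?m ^ Suc k"
    using assms g by (intro card_hits_deviation_le) auto
  finally have "(card ?B * (k * ?g)) * (k * ?g) \<le> (16 * ?m ^ Suc k) * (k * ?g)"
    by (simp add: power2_eq_square algebra_simps)
  then have "card ?B * (k * ?g) \<le> 16 * ?m ^ Suc k"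
    using assms(3) g by (simp add: mult_le_cancel_right_pos)
  moreover have "card ?B * (k * (\<epsilon> * ?m)) \<le> card ?B * (k * ?g)"
    using assms(5) by (intro mult_left_mono) auto
  ultimately have "(card ?B * (k * \<epsilon>)) * ?m \<le> (16 * ?m ^ k) * ?m"
    by (simp add: algebra_simps)
  then show ?thesis
    using m by (simp add: mult_le_cancel_right_pos)
qed

lemma card_hits_above_le:
  fixes \<epsilon> :: real
  assumes "finite F" "G \<subseteq> F" "k > 0" "\<epsilon> > 0" "F \<noteq> {}" "card G \<le> \<epsilon> * card F / 2"
  shows "card {xs\<in>samples F k. 3 / 4 * k * \<epsilon> \<le> hits G xs} * (k * \<epsilon>) \<le> 8 * real (card F) ^ k"
proof -
  let ?m = "real (card F)" and ?g = "real (card G)"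
  let ?B = "{xs\<in>samples F k. 3 / 4 * k * \<epsilon> \<le> hits G xs}"
  let ?\<delta> = "k * \<epsilon> * ?m / 4"
  have m: "?m > 0"
    using assms(1,5) by (simp add: card_gt_0_iff)
  have "?B \<subseteq> {xs\<in>samples F k. ?\<delta> \<le> \<bar>?m * hits G xs - k * ?g\<bar>}"
  proof safe
    fix xs assume "3 / 4 * k * \<epsilon> \<le> hits G xs"
    then have "3 / 4 * k * \<epsilon> * ?m \<le> ?m * hits G xs"
      using m by (simp add: algebra_simps)
    moreover have "k * ?g \<le> k * (\<epsilon> * ?m / 2)"
      using assms(6) by (intro mult_left_mono) auto
    ultimately show "?\<delta> \<le> \<bar>?m * hits G xs - k * ?g\<bar>"
      by linarith
  qed
  then have "card ?B * ?\<delta> ^ 2 \<le> card {xs\<in>samples F k. ?\<delta> \<le> \<bar>?m * hits G xs - k * ?g\<bar>} * ?\<delta> ^ 2"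
    using finite_samples[OF assms(1)] by (intro mult_right_mono) (auto intro: card_mono)
  also have "\<dots> \<le> k * ?g * ?m ^ Suc k"
    using assms m by (intro card_hits_deviation_le) auto
  also have "\<dots> \<le> k * (\<epsilon> * ?m / 2) * ?m ^ Suc k"
    using assms(6) by (intro mult_right_mono mult_left_mono) auto
  finally have "(card ?B * (k * \<epsilon>)) * (k * \<epsilon> * ?m ^ 2) \<le> (8 * ?m ^ k) * (k * \<epsilon> * ?m ^ 2)"
    by (simp add: power2_eq_square algebra_simps)
  then show ?thesis
    using assms(3,4) m by (simp add: mult_le_cancel_right_pos)
qed

lemma card_samples_avoiding:
  assumes "finite F" "G \<subseteq> F"
  shows "card {xs\<in>samples F k. set xs \<inter> G = {}} = (card F - card G) ^ k"
proof -
  have "{xs\<in>samples F k. set xs \<inter> G = {}} = samples (F - G) k"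
    unfolding samples_def by auto
  then show ?thesis
    using assms by (simp add: card_samples card_Diff_subset finite_subset)
qed

lemma one_minus_power_mult_le:
  fixes a :: real
  assumes "0 \<le> a" "a \<le> 1"
  shows "(1 - a) ^ k * (1 + k * a) \<le> 1"
proof (induction k)
  case 0
  then show ?case by simp
next
  case (Suc k)
  have "(1 - a) ^ Suc k * (1 + Suc k * a) = (1 - a) ^ k * ((1 - a) * (1 + k * a + a))"
    by (simp add: algebra_simps)
  also have "\<dots> \<le> (1 - a) ^ k * (1 + k * a)"
    using assms by (intro mult_left_mono) (simp_all add: algebra_simps)
  finally show ?case
    using Suc by linarith
qed

lemma card_samples_avoiding_le:
  fixes \<epsilon> :: real
  assumes "finite F" "G \<subseteq> F" "\<epsilon> > 0" "F \<noteq> {}" "\<epsilon> * card F / 2 < card G"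
  shows "card {xs\<in>samples F k. set xs \<inter> G = {}} * (k * \<epsilon>) \<le> 2 * real (card F) ^ k"
proof -
  let ?m = "real (card F)" and ?a = "real (card G) / real (card F)"
  have m: "?m > 0"
    using assms(1,4) by (simp add: card_gt_0_iff)
  have "card G \<le> card F"
    using assms(1,2) by (rule card_mono)
  then have a: "0 \<le> ?a" "?a \<le> 1" and eps: "\<epsilon> / 2 \<le> ?a"
    using m assms(5) by (auto simp: field_simps)
  have "real (card F - card G) = ?m * (1 - ?a)"
    using \<open>card G \<le> card F\<close> m by (simp add: field_simps)
  then have card: "card {xs\<in>samples F k. set xs \<inter> G = {}} = ?m ^ k * (1 - ?a) ^ k"
    by (simp add: card_samples_avoiding[OF assms(1,2)] power_mult_distrib)
  have "k * (\<epsilon> / 2) \<le> k * ?a"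
    using eps by (intro mult_left_mono) auto
  then have "(1 - ?a) ^ k * (k * (\<epsilon> / 2)) \<le> (1 - ?a) ^ k * (1 + k * ?a)"
    using a by (intro mult_left_mono) auto
  also have "\<dots> \<le> 1"
    using a by (rule one_minus_power_mult_le)
  finally have "(1 - ?a) ^ k * (k * \<epsilon>) \<le> 2"
    by simp
  then show ?thesis
    unfolding card using m by (simp add: mult.assoc mult_left_mono)
qed

section \<open>Hamming balls\<close>

lemma sum_Pow_power_card:
  fixes x :: "'b :: comm_semiring_1"
  assumes "finite X"
  shows "(\<Sum>D\<in>Pow X. x ^ card D) = (1 + x) ^ card X"
  using prod_add[OF assms, of "\<lambda>_. x" "\<lambda>_. 1"] by (simp add: add.commute)

lemma card_small_subsets_le:
  assumes "finite X" "r \<ge> 0"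
  shows "real (card {D\<in>Pow X. real (card D) \<le> r}) \<le> 2 powr r * (3 / 2) ^ card X"
proof -
  have "real (card {D\<in>Pow X. real (card D) \<le> r}) = (\<Sum>D\<in>Pow X. of_bool (real (card D) \<le> r))"
    using assms by (simp add: Int_def)
  also have "\<dots> \<le> (\<Sum>D\<in>Pow X. 2 powr r * (1 / 2) ^ card D)"
  proof (intro sum_mono)
    fix D :: "'a set"
    have "(2::real) ^ card D \<le> 2 powr r" if "real (card D) \<le> r"
      using that by (simp add: powr_realpow[symmetric])
    then show "of_bool (real (card D) \<le> r) \<le> 2 powr r * (1 / 2 :: real) ^ card D"
      by (auto simp: field_simps)
  qed
  also have "\<dots> = 2 powr r * (3 / 2) ^ card X"
    by (simp add: sum_distrib_left[symmetric] sum_Pow_power_card[OF assms(1)])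
  finally show ?thesis .
qed

lemma card_sym_diff_ball_le:
  assumes "finite X" "r \<ge> 0" "Z \<subseteq> X"
  shows "real (card {Y\<in>Pow X. real (card (sym_diff Y Z)) \<le> r}) \<le> 2 powr r * (3 / 2) ^ card X"
proof -
  let ?ball = "{Y\<in>Pow X. real (card (sym_diff Y Z)) \<le> r}"
  have "inj_on (\<lambda>Y. sym_diff Y Z) ?ball"
    by (auto simp: inj_on_def)
  moreover have "(\<lambda>Y. sym_diff Y Z) ` ?ball \<subseteq> {D\<in>Pow X. real (card D) \<le> r}"
    using assms(3) by auto
  ultimately have "card ?ball \<le> card {D\<in>Pow X. real (card D) \<le> r}"
    using assms(1) by (intro card_inj_on_le) auto
  then show ?thesis
    using card_small_subsets_le[OF assms(1,2)] by linarith
qed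

section \<open>Tri-edges of the refined tri-hypergraph of differences\<close>

lemma fam_xy_commute: "fam_xy F u v = fam_xy F v u"
  unfolding fam_xy_def by auto

lemma finite_fam_xy: "finite F \<Longrightarrow> finite (fam_xy F u v)"
  unfolding fam_xy_def by simp

lemma fam_xy_subset: "fam_xy F u v \<subseteq> F"
  unfolding fam_xy_def by auto

lemma doubleton_mem_disj_E_iff:
  "u \<in> V \<Longrightarrow> v \<in> V \<Longrightarrow> u \<noteq> v \<Longrightarrow> {u, v} \<in> disj_E V F \<longleftrightarrow> fam_xy F u v = {}"
  unfolding disj_E_def by (auto simp: doubleton_eq_iff fam_xy_commute)

lemma doubleton_mem_disj_R_iff:
  "u \<in> V \<Longrightarrow> v \<in> V \<Longrightarrow> u \<noteq> v \<Longrightarrow> {u, v} \<in> disj_R V F \<epsilon> \<longleftrightarrow>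
    0 < card (fam_xy F u v) \<and> real (card (fam_xy F u v)) \<le> \<epsilon> * real (card F)"
  unfolding disj_R_def by (auto simp: doubleton_eq_iff fam_xy_commute)

lemma doubleton_mem_disj_R1_iff:
  "u \<in> V \<Longrightarrow> v \<in> V \<Longrightarrow> u \<noteq> v \<Longrightarrow> {u, v} \<in> disj_R1 V F \<epsilon> \<longleftrightarrow>
    {u, v} \<in> disj_R V F \<epsilon> \<and> real (card (fam_xy F u v)) \<le> \<epsilon> * real (card F) / 2"
  unfolding disj_R1_def by (auto simp: doubleton_eq_iff fam_xy_commute insert_commute)

lemma black_triedge_diff_trigraph_edge_iff:
  assumes "u \<in> V" "v \<in> V"
  shows "u \<in> fst (triedge_diff V (trigraph_edge V E1 R1 v) (trigraph_edge V E2 R2 w)) \<longleftrightarrow>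
    (u = v \<or> {u, v} \<in> E1) \<and> u \<noteq> w \<and> {u, w} \<notin> E2 \<and> {u, w} \<notin> R2"
  using assms unfolding triedge_diff_def trigraph_edge_def Let_def by auto

lemma black_or_red_triedge_diff_trigraph_edge_iff:
  assumes "u \<in> V" "v \<in> V"
  shows "u \<in> fst (triedge_diff V (trigraph_edge V E1 R1 v) (trigraph_edge V E2 R2 w)) \<union>
      fst (snd (triedge_diff V (trigraph_edge V E1 R1 v) (trigraph_edge V E2 R2 w))) \<longleftrightarrow>
    (u = v \<or> {u, v} \<in> E1 \<union> R1) \<and> u \<noteq> w \<and> ({u, w} \<in> E2 \<longrightarrow> {u, w} \<in> R2)"
  using assms unfolding triedge_diff_def trigraph_edge_def Let_def by auto

text \<open>The information about a vertex \<open>u\<close> that the tri-edge of the pair \<open>(v, w)\<close> carries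
  when this tri-edge traces \<open>Y\<close>: the conditions for \<open>u\<close> being black in
  \<open>e\<^sub>v\<^sup>T\<^sup>1 \ e\<^sub>w\<^sup>T\<^sup>2\<close>, respectively for \<open>u\<close> being neither black nor red.\<close>

definition classifies :: "'a set set \<Rightarrow> real \<Rightarrow> 'a \<Rightarrow> 'a \<Rightarrow> 'a set \<Rightarrow> 'a \<Rightarrow> bool" where
  "classifies F \<epsilon> v w Y u \<longleftrightarrow>
     (u \<in> Y \<longrightarrow> (u = v \<or> fam_xy F u v = {}) \<and> u \<noteq> w \<and> \<epsilon> * real (card F) < real (card (fam_xy F u w))) \<and>
     (u \<notin> Y \<longrightarrow> (u \<noteq> v \<and> \<epsilon> * real (card F) / 2 < real (card (fam_xy F u v))) \<or> u = w \<or>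
        real (card (fam_xy F u w)) \<le> \<epsilon> * real (card F) / 2)"

lemma doubleton_mem_disj_E_Un_disj_R_iff:
  fixes \<epsilon> :: real
  assumes "finite F" "\<epsilon> \<ge> 0" "u \<in> V" "v \<in> V" "u \<noteq> v"
  shows "{u, v} \<in> disj_E V F \<union> disj_R V F \<epsilon> \<longleftrightarrow> real (card (fam_xy F u v)) \<le> \<epsilon> * real (card F)"
proof -
  have "0 < card (fam_xy F u v) \<longleftrightarrow> fam_xy F u v \<noteq> {}"
    using finite_fam_xy[OF assms(1)] by (simp add: card_gt_0_iff)
  then show ?thesis
    unfolding Un_iff doubleton_mem_disj_E_iff[OF assms(3-5)] doubleton_mem_disj_R_iff[OF assms(3-5)]
    using assms(2) by auto
qed

lemma doubleton_mem_disj_E_Un_disj_R1_iff: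
  fixes \<epsilon> :: real
  assumes "finite F" "\<epsilon> \<ge> 0" "u \<in> V" "v \<in> V" "u \<noteq> v"
  shows "{u, v} \<in> disj_E V F \<union> disj_R1 V F \<epsilon> \<longleftrightarrow> real (card (fam_xy F u v)) \<le> \<epsilon> * real (card F) / 2"
proof -
  have "{u, v} \<in> disj_E V F \<union> disj_R1 V F \<epsilon> \<longleftrightarrow>
      {u, v} \<in> disj_E V F \<union> disj_R V F \<epsilon> \<and> (fam_xy F u v = {} \<or> real (card (fam_xy F u v)) \<le> \<epsilon> * real (card F) / 2)"
    unfolding Un_iff doubleton_mem_disj_R1_iff[OF assms(3-5)] doubleton_mem_disj_E_iff[OF assms(3-5)]
    by (auto simp: doubleton_mem_disj_R_iff[OF assms(3-5)])
  also have "\<dots> \<longleftrightarrow> real (card (fam_xy F u v)) \<le> \<epsilon> * real (card F) / 2"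
    unfolding doubleton_mem_disj_E_Un_disj_R_iff[OF assms] using assms(2) by auto
  finally show ?thesis .
qed

lemma refined_diff_edge_classifies:
  fixes \<epsilon> :: real
  assumes "finite F" "\<epsilon> > 0" "u \<in> V" "v \<in> V" "w \<in> V"
    and e: "e = triedge_diff V (trigraph_edge V (disj_E V F) (disj_R1 V F \<epsilon>) v)
                 (trigraph_edge V (disj_E V F \<union> disj_R1 V F \<epsilon>) (disj_R2 V F \<epsilon>) w)"
    and black: "u \<in> fst e \<longleftrightarrow> u \<in> Y" and black_or_red: "u \<in> fst e \<union> fst (snd e) \<longleftrightarrow> u \<in> Y"
  shows "classifies F \<epsilon> v w Y u"
proof -
  have "\<epsilon> \<ge> 0"
    using assms(2) by simp
  note E_R = doubleton_mem_disj_E_Un_disj_R_iff[OF assms(1) this assms(3)]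
    and E_R1 = doubleton_mem_disj_E_Un_disj_R1_iff[OF assms(1) this assms(3)]
  have R2: "disj_R2 V F \<epsilon> = disj_R V F \<epsilon> - disj_R1 V F \<epsilon>" and "disj_R1 V F \<epsilon> \<subseteq> disj_R V F \<epsilon>"
    unfolding disj_R2_def disj_R1_def by auto
  moreover have "disj_E V F \<inter> disj_R V F \<epsilon> = {}"
    unfolding disj_E_def disj_R_def by (auto simp: doubleton_eq_iff fam_xy_commute)
  ultimately have R2_disjoint: "disj_R2 V F \<epsilon> \<inter> (disj_E V F \<union> disj_R1 V F \<epsilon>) = {}"
    by blast
  have "(u = v \<or> fam_xy F u v = {}) \<and> u \<noteq> w \<and> \<epsilon> * real (card F) < real (card (fam_xy F u w))"
    if "u \<in> Y"
  proof -
    have b: "(u = v \<or> {u, v} \<in> disj_E V F) \<and> u \<noteq> w \<and>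
        {u, w} \<notin> disj_E V F \<union> disj_R1 V F \<epsilon> \<and> {u, w} \<notin> disj_R2 V F \<epsilon>"
      using that black unfolding e black_triedge_diff_trigraph_edge_iff[OF assms(3,4)] by blast
    then have "{u, w} \<notin> disj_E V F \<union> disj_R V F \<epsilon>"
      using R2 by blast
    then show ?thesis
      using b E_R[OF assms(5)] doubleton_mem_disj_E_iff[OF assms(3,4)] by auto
  qed
  moreover have "(u \<noteq> v \<and> \<epsilon> * real (card F) / 2 < real (card (fam_xy F u v))) \<or> u = w \<or>
      real (card (fam_xy F u w)) \<le> \<epsilon> * real (card F) / 2" if "u \<notin> Y"
  proof -
    have "\<not> ((u = v \<or> {u, v} \<in> disj_E V F \<union> disj_R1 V F \<epsilon>) \<and> u \<noteq> w \<and>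
        ({u, w} \<in> disj_E V F \<union> disj_R1 V F \<epsilon> \<longrightarrow> {u, w} \<in> disj_R2 V F \<epsilon>))"
      using that black_or_red unfolding e black_or_red_triedge_diff_trigraph_edge_iff[OF assms(3,4)] by blast
    then have "(u \<noteq> v \<and> {u, v} \<notin> disj_E V F \<union> disj_R1 V F \<epsilon>) \<or> u = w \<or> {u, w} \<in> disj_E V F \<union> disj_R1 V F \<epsilon>"
      using R2_disjoint by blast
    then show ?thesis
      using E_R1[OF assms(4)] E_R1[OF assms(5)] by auto
  qed
  ultimately show ?thesis
    unfolding classifies_def by blast
qed

lemma shattered_classifying_pairs:
  fixes \<epsilon> :: real
  assumes "tri_shattered V (refined_diff_edges V F \<epsilon>) X" "finite F" "\<epsilon> > 0"
  obtains vf wf where "\<And>Y u. Y \<subseteq> X \<Longrightarrow> u \<in> X \<Longrightarrow> classifies F \<epsilon> (vf Y) (wf Y) Y u"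
proof -
  have XV: "X \<subseteq> V"
    using assms(1) unfolding tri_shattered_def by simp
  have "\<forall>Y. \<exists>p. Y \<subseteq> X \<longrightarrow> (\<forall>u\<in>X. classifies F \<epsilon> (fst p) (snd p) Y u)"
  proof
    fix Y
    show "\<exists>p. Y \<subseteq> X \<longrightarrow> (\<forall>u\<in>X. classifies F \<epsilon> (fst p) (snd p) Y u)"
    proof (cases "Y \<subseteq> X")
      case True
      then obtain e where "e \<in> refined_diff_edges V F \<epsilon>"
        and trace_case: "case e of (B, R, W) \<Rightarrow> X \<inter> B = Y \<and> X \<inter> (B \<union> R) = Y"
        using assms(1) unfolding tri_shattered_def by blast
      then obtain v w where vw: "v \<in> V" "w \<in> V"
        and e: "e = triedge_diff V (trigraph_edge V (disj_E V F) (disj_R1 V F \<epsilon>) v)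
                  (trigraph_edge V (disj_E V F \<union> disj_R1 V F \<epsilon>) (disj_R2 V F \<epsilon>) w)"
        unfolding refined_diff_edges_def by blast
      have trace: "X \<inter> fst e = Y" "X \<inter> (fst e \<union> fst (snd e)) = Y"
        using trace_case by (cases e; simp)+
      have "classifies F \<epsilon> v w Y u" if "u \<in> X" for u
        using that XV trace by (intro refined_diff_edge_classifies[OF assms(2,3) _ vw e]) auto
      then show ?thesis
        by (intro exI[of _ "(v, w)"]) simp
    qed simp
  qed
  then obtain p where "\<forall>Y. Y \<subseteq> X \<longrightarrow> (\<forall>u\<in>X. classifies F \<epsilon> (fst (p Y)) (snd (p Y)) Y u)"
    by metis
  then show ?thesis
    by (intro that[of "\<lambda>Y. fst (p Y)" "\<lambda>Y. snd (p Y)"]) blast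
qed

section \<open>Estimating a traced set from a sample\<close>

definition pattern :: "'b set list \<Rightarrow> 'b \<Rightarrow> nat set" where
  "pattern xs v = {i. i < length xs \<and> v \<in> xs ! i}"

definition estimate :: "'b set \<Rightarrow> real \<Rightarrow> 'b set list \<Rightarrow> nat set \<Rightarrow> nat set \<Rightarrow> 'b set" where
  "estimate X t xs I J = {u\<in>X. pattern xs u \<inter> I = {} \<and> t \<le> card (pattern xs u \<inter> J)}"

lemma pattern_subset: "pattern xs v \<subseteq> {..<length xs}"
  unfolding pattern_def by auto

lemma estimate_subset: "estimate X t xs I J \<subseteq> X"
  unfolding estimate_def by auto

lemma pattern_Int_pattern:
  assumes "set xs \<subseteq> F"
  shows "pattern xs u \<inter> pattern xs w = {i. i < length xs \<and> xs ! i \<in> fam_xy F u w}"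
  using assms nth_mem unfolding pattern_def fam_xy_def by fastforce

lemma card_pattern_Int_pattern:
  assumes "set xs \<subseteq> F"
  shows "card (pattern xs u \<inter> pattern xs w) = hits (fam_xy F u w) xs"
  unfolding pattern_Int_pattern[OF assms] hits_def length_filter_conv_card ..

lemma pattern_Int_pattern_eq_empty_iff:
  assumes "set xs \<subseteq> F"
  shows "pattern xs u \<inter> pattern xs v = {} \<longleftrightarrow> set xs \<inter> fam_xy F u v = {}"
  unfolding pattern_Int_pattern[OF assms] using nth_mem by (fastforce simp: in_set_conv_nth)

lemma card_misestimating_samples_le:
  fixes \<epsilon> :: real
  assumes "finite F" "F \<noteq> {}" "\<epsilon> > 0" "k > 0" "u \<in> X" "u \<noteq> v" "u \<noteq> w"
    and "classifies F \<epsilon> v w Y u"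
  shows "card {xs\<in>samples F k. u \<in> sym_diff Y (estimate X (3 / 4 * k * \<epsilon>) xs (pattern xs v) (pattern xs w))}
    * (k * \<epsilon>) \<le> 16 * real (card F) ^ k"
    (is "real (card ?B) * _ \<le> _")
proof -
  have est: "u \<in> estimate X (3 / 4 * k * \<epsilon>) xs (pattern xs v) (pattern xs w) \<longleftrightarrow>
      set xs \<inter> fam_xy F u v = {} \<and> 3 / 4 * k * \<epsilon> \<le> hits (fam_xy F u w) xs" if "xs \<in> samples F k" for xs
    using assms(5) pattern_Int_pattern_eq_empty_iff[OF set_subset_if_samples[OF that]]
      card_pattern_Int_pattern[OF set_subset_if_samples[OF that]]
    unfolding estimate_def by simp
  have reduce: "real (card ?B) * (k * \<epsilon>) \<le> 16 * real (card F) ^ k"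
    if "?B \<subseteq> {xs\<in>samples F k. P xs}" "real (card {xs\<in>samples F k. P xs}) * (k * \<epsilon>) \<le> c * real (card F) ^ k"
      "c \<le> 16" for P c
  proof -
    have "card ?B \<le> card {xs\<in>samples F k. P xs}"
      using that(1) finite_samples[OF assms(1)] by (intro card_mono) auto
    then have "real (card ?B) * (k * \<epsilon>) \<le> real (card {xs\<in>samples F k. P xs}) * (k * \<epsilon>)"
      using assms(3) by (intro mult_right_mono) auto
    also have "\<dots> \<le> 16 * real (card F) ^ k"
      using that(2,3) by (meson order_trans mult_right_mono zero_le_power of_nat_0_le_iff)
    finally show ?thesis .
  qed
  consider "u \<in> Y" "fam_xy F u v = {}" "\<epsilon> * card F < card (fam_xy F u w)"
    | "u \<notin> Y" "\<epsilon> * card F / 2 < card (fam_xy F u v)"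
    | "u \<notin> Y" "card (fam_xy F u w) \<le> \<epsilon> * card F / 2"
    using assms(6-8) unfolding classifies_def by fastforce
  then show ?thesis
  proof cases
    case 1
    then show ?thesis
      using est card_hits_below_le[OF assms(1) fam_xy_subset assms(4,3) 1(3)]
      by (intro reduce[where P = "\<lambda>xs. hits (fam_xy F u w) xs < 3 / 4 * k * \<epsilon>" and c = 16]) auto
  next
    case 2
    then show ?thesis
      using est card_samples_avoiding_le[OF assms(1) fam_xy_subset assms(3,2) 2(2), of k]
      by (intro reduce[where P = "\<lambda>xs. set xs \<inter> fam_xy F u v = {}" and c = 2]) auto
  next
    case 3
    then show ?thesis
      using est card_hits_above_le[OF assms(1) fam_xy_subset assms(4,3,2) 3(2)]
      by (intro reduce[where P = "\<lambda>xs. 3 / 4 * k * \<epsilon> \<le> hits (fam_xy F u w) xs" and c = 8]) auto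
  qed
qed

section \<open>Counting shattered sets\<close>

lemma sum_card_eq_sum_card_filter:
  assumes "finite A" "finite B" "\<And>x. x \<in> A \<Longrightarrow> S x \<subseteq> B"
  shows "(\<Sum>x\<in>A. card (S x)) = (\<Sum>y\<in>B. card {x\<in>A. y \<in> S x})"
proof -
  have "(\<Sum>x\<in>A. card (S x)) = (\<Sum>x\<in>A. \<Sum>y\<in>B. of_bool (y \<in> S x))"
    using assms by (intro sum.cong refl) (simp add: Int_absorb1 finite_subset)
  also have "\<dots> = (\<Sum>y\<in>B. \<Sum>x\<in>A. of_bool (y \<in> S x))"
    by (rule sum.swap)
  also have "\<dots> = (\<Sum>y\<in>B. card {x\<in>A. y \<in> S x})"
    using assms(1) by (simp add: Int_def)
  finally show ?thesis .
qed

lemma card_ge_mult_le_sum: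
  fixes f :: "'b \<Rightarrow> real" and r :: real
  assumes "finite A" "\<And>x. x \<in> A \<Longrightarrow> 0 \<le> f x"
  shows "card {x\<in>A. r \<le> f x} * r \<le> sum f A"
proof -
  have "card {x\<in>A. r \<le> f x} * r = (\<Sum>x\<in>{x\<in>A. r \<le> f x}. r)"
    by simp
  also have "\<dots> \<le> (\<Sum>x\<in>{x\<in>A. r \<le> f x}. f x)"
    by (rule sum_mono) simp
  also have "\<dots> \<le> sum f A"
    using assms by (intro sum_mono2) auto
  finally show ?thesis .
qed

lemma card_near_family_le:
  assumes "finite X" "r \<ge> 0" "\<And>I J. Z I J \<subseteq> X"
  shows "real (card {Y\<in>Pow X. \<exists>I\<in>Pow {..<k}. \<exists>J\<in>Pow {..<k}. real (card (sym_diff Y (Z I J))) \<le> r})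
    \<le> 4 ^ k * (2 powr r * (3 / 2) ^ card X)"
proof -
  let ?P = "Pow {..<k::nat} \<times> Pow {..<k}"
  let ?ball = "\<lambda>p. {Y\<in>Pow X. real (card (sym_diff Y (Z (fst p) (snd p)))) \<le> r}"
  have "card {Y\<in>Pow X. \<exists>I\<in>Pow {..<k}. \<exists>J\<in>Pow {..<k}. real (card (sym_diff Y (Z I J))) \<le> r}
      \<le> card (\<Union>p\<in>?P. ?ball p)"
    using assms(1) by (intro card_mono) force+
  also have "\<dots> \<le> (\<Sum>p\<in>?P. card (?ball p))"
    by (rule card_UN_le) simp
  finally have "real (card {Y\<in>Pow X. \<exists>I\<in>Pow {..<k}. \<exists>J\<in>Pow {..<k}. real (card (sym_diff Y (Z I J))) \<le> r})
      \<le> (\<Sum>p\<in>?P. real (card (?ball p)))"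
    by (simp flip: of_nat_sum)
  also have "\<dots> \<le> (\<Sum>p\<in>?P. 2 powr r * (3 / 2) ^ card X)"
    using assms by (intro sum_mono card_sym_diff_ball_le) auto
  also have "\<dots> = 4 ^ k * (2 powr r * (3 / 2) ^ card X)"
    by (simp add: card_cartesian_product card_Pow power_mult_distrib[symmetric])
  finally show ?thesis .
qed

lemma dimension_arith:
  fixes n k :: nat
  assumes "2 ^ n \<le> 2 * 4 ^ k * 2 powr (4 + n / 50) * (3 / 2) ^ n"
  shows "real n \<le> (200 * real k + 500) / 23"
proof -
  let ?r = "4 + real n / 50"
  have "(4 / 3) ^ n * (3 / 2) ^ n \<le> (2 * 4 ^ k * 2 powr ?r) * (3 / 2 :: real) ^ n"
    using assms by (simp add: power_mult_distrib[symmetric])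
  then have "(4 / 3 :: real) ^ n \<le> 2 powr (1 + 2 * real k + ?r)"
    by (simp add: powr_add powr_realpow[symmetric] powr_powr[symmetric] power_mult mult_le_cancel_right_pos)
  then have ln_ineq: "n * ln (4 / 3) \<le> (1 + 2 * real k + ?r) * ln 2"
    by (subst (asm) ln_le_cancel_iff[symmetric]) (auto simp: ln_realpow)
  have "n * (1 / 4) \<le> n * ln (4 / 3 :: real)"
    using ln_le_minus_one[of "3 / 4 :: real"] ln_inverse[of "3 / 4 :: real"] by (intro mult_left_mono) auto
  also have "\<dots> \<le> (1 + 2 * real k + ?r) * ln 2"
    by (rule ln_ineq)
  also have "\<dots> \<le> 1 + 2 * real k + ?r"
    using ln_le_minus_one[of "2 :: real"] mult_left_mono[of "ln 2" 1 "1 + 2 * real k + ?r"] by simp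
  finally show ?thesis
    by simp
qed

lemma sum_card_misestimates_le:
  fixes \<epsilon> :: real
  assumes "finite F" "F \<noteq> {}" "\<epsilon> > 0" "k > 0" "1600 \<le> k * \<epsilon>" "finite X" "Y \<subseteq> X"
    and "\<And>u. u \<in> X \<Longrightarrow> classifies F \<epsilon> v w Y u"
  shows "(\<Sum>xs\<in>samples F k. real (card (sym_diff Y (estimate X (3 / 4 * k * \<epsilon>) xs (pattern xs v) (pattern xs w)))))
    \<le> real (card F) ^ k * (2 + card X / 100)"
proof -
  let ?M = "real (card F) ^ k"
  let ?E = "\<lambda>xs. sym_diff Y (estimate X (3 / 4 * k * \<epsilon>) xs (pattern xs v) (pattern xs w))"
  have "?E xs \<subseteq> X" for xs
    using assms(7) estimate_subset[of X "3 / 4 * k * \<epsilon>" xs "pattern xs v" "pattern xs w"] by auto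
  then have "(\<Sum>xs\<in>samples F k. card (?E xs)) = (\<Sum>u\<in>X. card {xs\<in>samples F k. u \<in> ?E xs})"
    using finite_samples[OF assms(1)] assms(6) by (intro sum_card_eq_sum_card_filter) auto
  then have "(\<Sum>xs\<in>samples F k. real (card (?E xs))) = (\<Sum>u\<in>X. real (card {xs\<in>samples F k. u \<in> ?E xs}))"
    by (simp flip: of_nat_sum)
  also have "\<dots> \<le> (\<Sum>u\<in>X. ?M / 100 + ?M * of_bool (u \<in> {v, w}))"
  proof (intro sum_mono)
    fix u assume "u \<in> X"
    show "real (card {xs\<in>samples F k. u \<in> ?E xs}) \<le> ?M / 100 + ?M * of_bool (u \<in> {v, w})"
    proof (cases "u \<in> {v, w}")
      case True
      have "card {xs\<in>samples F k. u \<in> ?E xs} \<le> card (samples F k)"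
        using finite_samples[OF assms(1)] by (intro card_mono) auto
      then have "real (card {xs\<in>samples F k. u \<in> ?E xs}) \<le> ?M"
        unfolding card_samples[OF assms(1)] of_nat_power[symmetric] by (rule of_nat_mono)
      moreover have "0 \<le> ?M"
        by simp
      moreover have "?M * of_bool (u \<in> {v, w}) = ?M"
        using True by simp
      ultimately show ?thesis
        by linarith
    next
      case False
      then have "real (card {xs\<in>samples F k. u \<in> ?E xs}) * (k * \<epsilon>) \<le> 16 * ?M"
        using \<open>u \<in> X\<close> assms by (intro card_misestimating_samples_le) auto
      moreover have "real (card {xs\<in>samples F k. u \<in> ?E xs}) * 1600 \<le> real (card {xs\<in>samples F k. u \<in> ?E xs}) * (k * \<epsilon>)"
        using assms(5) by (intro mult_left_mono) auto
      ultimately show ?thesis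
        using False by simp
    qed
  qed
  also have "\<dots> = card X * (?M / 100) + ?M * card (X \<inter> {u. u \<in> {v, w}})"
    using sum_mult_of_bool_eq[OF assms(6), of "\<lambda>_. ?M" "\<lambda>u. u \<in> {v, w}"]
    by (simp only: sum.distrib sum_constant) (simp add: mult.commute)
  also have "\<dots> \<le> card X * (?M / 100) + ?M * 2"
  proof -
    have "card (X \<inter> {u. u \<in> {v, w}}) \<le> card {v, w}"
      by (intro card_mono) auto
    also have "\<dots> \<le> 2"
      by (simp add: card_insert_if)
    finally show ?thesis
      by (intro add_left_mono mult_left_mono) auto
  qed
  finally show ?thesis
    by (simp add: algebra_simps)
qed

lemma card_le_if_classifying_pairs:
  fixes \<epsilon> :: real and X :: "'a set" and vf wf :: "'a set \<Rightarrow> 'a"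
  assumes "finite F" "F \<noteq> {}" "\<epsilon> > 0" "k > 0" "1600 \<le> k * \<epsilon>" "finite X"
    and classifying: "\<And>Y u. Y \<subseteq> X \<Longrightarrow> u \<in> X \<Longrightarrow> classifies F \<epsilon> (vf Y) (wf Y) Y u"
  shows "real (card X) \<le> (200 * real k + 500) / 23"
proof -
  define M where "M = real (card F) ^ k"
  define r where "r = 4 + real (card X) / 50"
  define err where "err Y xs =
    real (card (sym_diff Y (estimate X (3 / 4 * k * \<epsilon>) xs (pattern xs (vf Y)) (pattern xs (wf Y)))))" for Y xs
  define good where "good Y = {xs\<in>samples F k. err Y xs \<le> r}" for Y
  have "M > 0"
    unfolding M_def using assms(1,2) by (simp add: card_gt_0_iff)
  have card_samples': "real (card (samples F k)) = M"
    unfolding M_def by (simp add: card_samples[OF assms(1)])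
  have "r > 0"
    unfolding r_def by (simp add: add_pos_nonneg)
  have many_good: "M / 2 \<le> card (good Y)" if "Y \<subseteq> X" for Y
  proof -
    let ?bad = "{xs\<in>samples F k. r \<le> err Y xs}"
    have "card ?bad * r \<le> (\<Sum>xs\<in>samples F k. err Y xs)"
      using finite_samples[OF assms(1)] by (intro card_ge_mult_le_sum) (auto simp: err_def)
    also have "\<dots> \<le> M * (2 + card X / 100)"
      unfolding err_def M_def using that classifying assms
      by (intro sum_card_misestimates_le) auto
    also have "\<dots> = M / 2 * r"
      unfolding r_def by (simp add: algebra_simps)
    finally have "card ?bad \<le> M / 2"
      using \<open>r > 0\<close> by (simp add: mult_le_cancel_right_pos)
    moreover have "card (samples F k) \<le> card (good Y \<union> ?bad)"
      unfolding good_def using finite_samples[OF assms(1)] by (intro card_mono) auto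
    then have "card (samples F k) \<le> card (good Y) + card ?bad"
      using card_Un_le le_trans by blast
    ultimately show ?thesis
      using card_samples' by linarith
  qed
  have few_good: "card {Y\<in>Pow X. xs \<in> good Y} \<le> 4 ^ k * (2 powr r * (3 / 2) ^ card X)"
    if "xs \<in> samples F k" for xs
  proof -
    have "pattern xs v \<in> Pow {..<k}" for v
      using that pattern_subset[of xs v] unfolding samples_def by auto
    then have "{Y\<in>Pow X. xs \<in> good Y} \<subseteq> {Y\<in>Pow X. \<exists>I\<in>Pow {..<k}. \<exists>J\<in>Pow {..<k}.
        real (card (sym_diff Y (estimate X (3 / 4 * k * \<epsilon>) xs I J))) \<le> r}"
      unfolding good_def err_def by blast
    then have "real (card {Y\<in>Pow X. xs \<in> good Y}) \<le> card {Y\<in>Pow X. \<exists>I\<in>Pow {..<k}. \<exists>J\<in>Pow {..<k}.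
        real (card (sym_diff Y (estimate X (3 / 4 * k * \<epsilon>) xs I J))) \<le> r}"
      using assms(6) by (intro of_nat_mono card_mono) auto
    also have "\<dots> \<le> 4 ^ k * (2 powr r * (3 / 2) ^ card X)"
      using assms(6) \<open>r > 0\<close> by (intro card_near_family_le estimate_subset) auto
    finally show ?thesis .
  qed
  have "2 ^ card X * (M / 2) = (\<Sum>Y\<in>Pow X. M / 2)"
    using assms(6) by (simp add: card_Pow)
  also have "\<dots> \<le> (\<Sum>Y\<in>Pow X. real (card (good Y)))"
    using many_good by (intro sum_mono) auto
  also have "\<dots> = (\<Sum>xs\<in>samples F k. real (card {Y\<in>Pow X. xs \<in> good Y}))"
    using sum_card_eq_sum_card_filter[of "Pow X" "samples F k" good] assms(6) finite_samples[OF assms(1)]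
    unfolding good_def by (simp flip: of_nat_sum)
  also have "\<dots> \<le> (\<Sum>xs\<in>samples F k. 4 ^ k * (2 powr r * (3 / 2) ^ card X))"
    using few_good by (intro sum_mono) auto
  also have "\<dots> = (2 * 4 ^ k * 2 powr r * (3 / 2) ^ card X) * (M / 2)"
    using card_samples' by simp
  finally have "2 ^ card X \<le> 2 * 4 ^ k * 2 powr r * (3 / 2) ^ card X"
    using \<open>M > 0\<close> by (simp add: mult_le_cancel_right_pos)
  then show ?thesis
    unfolding r_def by (rule dimension_arith)
qed

lemma card_shattered_refined_diff_le:
  fixes \<epsilon> :: real
  assumes "0 < \<epsilon>" "\<epsilon> \<le> 1" "finite V" "finite F" "F \<noteq> {}"
    and "tri_shattered V (refined_diff_edges V F \<epsilon>) X"
  shows "real (card X) \<le> 15000 / \<epsilon>"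
proof -
  obtain vf wf where "\<And>Y u. Y \<subseteq> X \<Longrightarrow> u \<in> X \<Longrightarrow> classifies F \<epsilon> (vf Y) (wf Y) Y u"
    using shattered_classifying_pairs[OF assms(6,4,1)] by blast
  moreover have "finite X"
    using assms(3,6) finite_subset unfolding tri_shattered_def by blast
  moreover define k where "k = nat \<lceil>1600 / \<epsilon>\<rceil>"
  moreover have "real k = of_int \<lceil>1600 / \<epsilon>\<rceil>"
    unfolding k_def using assms(1) by (simp add: add_pos_nonneg)
  then have "1600 / \<epsilon> \<le> k" "k \<le> 1600 / \<epsilon> + 1"
    using ceiling_correct[of "1600 / \<epsilon>"] by linarith+
  moreover from this have "1600 \<le> k * \<epsilon>"
    using assms(1) by (simp add: field_simps)
  moreover have "k > 0"
  proof -
    have "0 < 1600 / \<epsilon>"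
      using assms(1) by simp
    then show ?thesis
      using \<open>1600 / \<epsilon> \<le> k\<close> of_nat_0_less_iff[where 'a = real, of k] by linarith
  qed
  ultimately have "real (card X) \<le> (200 * real k + 500) / 23"
    using assms(1,4,5) by (intro card_le_if_classifying_pairs) auto
  also have "\<dots> \<le> (320000 / \<epsilon> + 700) / 23"
    using \<open>k \<le> 1600 / \<epsilon> + 1\<close> by simp
  also have "\<dots> \<le> 15000 / \<epsilon>"
    using assms(1,2) by (simp add: field_simps)
  finally show ?thesis .
qed

lemma tri_vc_dim_le:
  assumes "finite V" "0 \<le> c" "\<And>X. tri_shattered V \<E> X \<Longrightarrow> real (card X) \<le> c"
  shows "real (tri_vc_dim V \<E>) \<le> c"
proof -
  let ?S = "{0} \<union> {card X | X. tri_shattered V \<E> X}"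
  have "?S \<subseteq> {0..card V}"
    using assms(1) by (auto simp: tri_shattered_def card_mono)
  then have "Max ?S \<in> ?S"
    by (intro Max_in) (auto intro: finite_subset)
  then show ?thesis
    using assms(2,3) unfolding tri_vc_dim_def by auto
qed

theorem lemma4p11:
  shows "\<exists>C::real. C > 0 \<and>
    (\<forall>(\<epsilon>::real) (V::nat set) (\<F>::nat set set).
       0 < \<epsilon> \<and> \<epsilon> \<le> 1 \<and> finite V \<and> finite \<F> \<and> \<F> \<noteq> {} \<and> (\<forall>S\<in>\<F>. S \<subseteq> V) \<longrightarrow>
       real (tri_vc_dim V (refined_diff_edges V \<F> \<epsilon>)) \<le> C * (1 / \<epsilon>) * ln (2 / \<epsilon>))"
proof (intro exI[of _ 30000] conjI allI impI)
  fix \<epsilon> :: real and V :: "nat set" and \<F> :: "nat set set"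
  assume H: "0 < \<epsilon> \<and> \<epsilon> \<le> 1 \<and> finite V \<and> finite \<F> \<and> \<F> \<noteq> {} \<and> (\<forall>S\<in>\<F>. S \<subseteq> V)"
  have "1 / 2 \<le> ln (2 :: real)"
    using ln_le_minus_one[of "1 / 2 :: real"] ln_inverse[of "2 :: real"] by simp
  also have "\<dots> \<le> ln (2 / \<epsilon>)"
    using H by (simp add: field_simps)
  finally have "15000 / \<epsilon> \<le> 30000 * (1 / \<epsilon>) * ln (2 / \<epsilon>)"
    using H by (simp add: field_simps)
  moreover have "real (tri_vc_dim V (refined_diff_edges V \<F> \<epsilon>)) \<le> 15000 / \<epsilon>"
    using H card_shattered_refined_diff_le by (intro tri_vc_dim_le) auto
  ultimately show "real (tri_vc_dim V (refined_diff_edges V \<F> \<epsilon>)) \<le> 30000 * (1 / \<epsilon>) * ln (2 / \<epsilon>)"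
    by linarith
qed simp

end
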